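(* Let $1\le p,q<\infty$, let $\nu$ be a modulus of variation, $\phi$ an Orlicz function, and $\Lambda=\{\lambda_j\}$ a $\Lambda$-sequence. Then (all classes of functions on $[0,1]$, inclusion meaning every function of the first class belongs to the second): (i) $BV_q\subseteq V_p[\nu]$ iff $\limsup_{n\to\infty}\frac1{\nu(n)}\max_{1\le k\le n}k^{1/p-1/q}<\infty$; (ii) $V_\phi\subseteq V_p[\nu]$ iff $\limsup_{n\to\infty}\frac1{\nu(n)}\max_{1\le k\le n}k^{1/p}\phi^{-1}(1/k)<\infty$; (iii) $\Lambda\mathrm{BV}\subseteq V_p[\nu]$ iff $\limsup_{n\to\infty}\frac1{\nu(n)}\max_{1\le k\le n}\frac{k^{1/p}}{\sum_{j=1}^k1/\lambda_j}<\infty$; (iv) $\Lambda\mathrm{BV}^{(q)}\subseteq V_p[\nu]$ iff $\limsup_{n\to\infty}\frac1{\nu(n)}\max_{1\le k\le n}k^{1/p}\big(\sum_{j=1}^k1/\lambda_j\big)^{-1/q}<\infty$; (v) $\phi\Lambda\mathrm{BV}\subseteq V_p[\nu]$ iff $\limsup_{n\to\infty}\frac1{\nu(n)}\max_{1\le k\le n}k^{1/p}\phi^{-1}\Big(\big(\sum_{j=1}^k1/\lambda_j\big)^{-1}\Big)<\infty$.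
   Context: A modulus of variation is a nondecreasing concave sequence of positive numbers. An Orlicz function is a continuous convex $\phi$ on $[0,\infty)$ with $\phi(x)>0$ for $x>0$, $\phi(x)/x\to0$ as $x\to0^+$ and $\phi(x)/x\to\infty$ as $x\to\infty$. A $\Lambda$-sequence is a nondecreasing sequence of positive numbers with $\sum_j1/\lambda_j=\infty$. For $f$ on $[0,1]$ and nonoverlapping subintervals $I_j$, $f(I)=f(\sup I)-f(\inf I)$. Given a sequence $\{\phi_j\}$ of increasing convex functions with $\phi_j(0)=0$, a function $f$ belongs to the class defined by $\{\phi_j\}$ if $\sup\sum_j\phi_j(|cf(I_j)|)<\infty$ for some $c>0$, the sup over all finite collections of nonoverlapping subintervals of $[0,1]$. $V_\phi$ is this class with $\phi_j=\phi$; $BV_q$ with $\phi_j(x)=x^q$; $\phi\Lambda\mathrm{BV}$ with $\phi_j=\phi/\lambda_j$; $\Lambda\mathrm{BV}^{(q)}$ with $\phi_j(x)=x^q/\lambda_j$; $\Lambda\mathrm{BV}=\Lambda\mathrm{BV}^{(1)}$. $\upsilon_p(n,f)=\sup(\sum_{j=1}^n|f(I_j)|^p)^{1/p}$ over $n$ nonoverlapping subintervals, and $V_p[\nu]$ is the set of bounded $f$ with $\sup_n\upsilon_p(n,f)/\nu(n)<\infty$. *)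

theory Defs
  imports "HOL-Analysis.Analysis"
begin

text \<open>All sequences are indexed from 1 (values at index 0 are irrelevant).\<close>

definition modulus_of_variation :: "(nat \<Rightarrow> real) \<Rightarrow> bool" where
  "modulus_of_variation \<nu> \<longleftrightarrow>
     (\<forall>n\<ge>1. 0 < \<nu> n) \<and> (\<forall>n\<ge>1. \<nu> n \<le> \<nu> (Suc n)) \<and>
     (\<forall>n\<ge>1. \<nu> (Suc (Suc n)) - \<nu> (Suc n) \<le> \<nu> (Suc n) - \<nu> n)"

definition orlicz_function :: "(real \<Rightarrow> real) \<Rightarrow> bool" where
  "orlicz_function \<phi> \<longleftrightarrow>
     continuous_on {0..} \<phi> \<and> convex_on {0..} \<phi> \<and> (\<forall>x>0. \<phi> x > 0) \<and>
     ((\<lambda>x. \<phi> x / x) \<longlongrightarrow> 0) (at_right 0) \<and>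
     filterlim (\<lambda>x. \<phi> x / x) at_top at_top"

definition Lambda_sequence :: "(nat \<Rightarrow> real) \<Rightarrow> bool" where
  "Lambda_sequence \<Lambda> \<longleftrightarrow>
     (\<forall>j\<ge>1. 0 < \<Lambda> j) \<and> (\<forall>j\<ge>1. \<Lambda> j \<le> \<Lambda> (Suc j)) \<and>
     \<not> summable (\<lambda>j. 1 / \<Lambda> (Suc j))"

definition orlicz_inv :: "(real \<Rightarrow> real) \<Rightarrow> real \<Rightarrow> real" where
  "orlicz_inv \<phi> y = (THE x. 0 \<le> x \<and> \<phi> x = y)"

definition nonoverlapping :: "nat \<Rightarrow> (nat \<Rightarrow> real) \<Rightarrow> (nat \<Rightarrow> real) \<Rightarrow> bool" where
  "nonoverlapping n a b \<longleftrightarrow>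
     (\<forall>j\<in>{1..n}. 0 \<le> a j \<and> a j \<le> b j \<and> b j \<le> 1) \<and>
     (\<forall>i\<in>{1..n}. \<forall>j\<in>{1..n}. i \<noteq> j \<longrightarrow> b i \<le> a j \<or> b j \<le> a i)"

definition phi_class :: "(nat \<Rightarrow> real \<Rightarrow> real) \<Rightarrow> (real \<Rightarrow> real) set" where
  "phi_class \<Phi> = {f. \<exists>c>0. \<exists>M. \<forall>n a b. nonoverlapping n a b \<longrightarrow>
       (\<Sum>j=1..n. \<Phi> j \<bar>c * (f (b j) - f (a j))\<bar>) \<le> M}"

definition BV_q :: "real \<Rightarrow> (real \<Rightarrow> real) set" where
  "BV_q q = phi_class (\<lambda>j x. x powr q)"

definition V_phi :: "(real \<Rightarrow> real) \<Rightarrow> (real \<Rightarrow> real) set" where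
  "V_phi \<phi> = phi_class (\<lambda>j. \<phi>)"

definition phiLambdaBV :: "(real \<Rightarrow> real) \<Rightarrow> (nat \<Rightarrow> real) \<Rightarrow> (real \<Rightarrow> real) set" where
  "phiLambdaBV \<phi> \<Lambda> = phi_class (\<lambda>j x. \<phi> x / \<Lambda> j)"

definition LambdaBV_q :: "(nat \<Rightarrow> real) \<Rightarrow> real \<Rightarrow> (real \<Rightarrow> real) set" where
  "LambdaBV_q \<Lambda> q = phi_class (\<lambda>j x. x powr q / \<Lambda> j)"

definition LambdaBV :: "(nat \<Rightarrow> real) \<Rightarrow> (real \<Rightarrow> real) set" where
  "LambdaBV \<Lambda> = LambdaBV_q \<Lambda> 1"

definition Vp_nu :: "real \<Rightarrow> (nat \<Rightarrow> real) \<Rightarrow> (real \<Rightarrow> real) set" where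
  "Vp_nu p \<nu> = {f. (\<exists>B. \<forall>x\<in>{0..1}. \<bar>f x\<bar> \<le> B) \<and>
      (\<exists>M. \<forall>n\<ge>1. \<forall>a b. nonoverlapping n a b \<longrightarrow>
          (\<Sum>j=1..n. \<bar>f (b j) - f (a j)\<bar> powr p) powr (1 / p) \<le> M * \<nu> n)}"

end

theory Submission
  imports Defs
begin

text \<open>Each of the five classes is \<open>phi_class (\<lambda>j x. \<psi> x / \<Lambda> j)\<close> for a convex \<open>\<psi>\<close> mapping
  \<open>[0,\<infinity>)\<close> onto itself and a positive nondecreasing \<open>\<Lambda>\<close> (\<open>\<Lambda> = 1\<close> for \<open>BV\<^sub>q\<close> and \<open>V\<^sub>\<phi>\<close>), so one
  criterion covers them. Let \<open>W k = (\<Sum>j=1..k. 1 / \<Lambda> j)\<close> (\<open>weight_sum\<close>) and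
  \<open>A k = \<psi>\<^sup>-\<^sup>1 (1 / W k)\<close> (\<open>unit_height\<close>), the height of \<open>k\<close> equal jumps of weighted
  \<open>\<psi>\<close>-variation 1. The class lies in \<open>V\<^sub>p[\<nu>]\<close> iff \<open>k\<^sup>1\<^sup>/\<^sup>p A k = O(\<nu> k)\<close>, and for nondecreasing
  \<open>\<nu>\<close> this is the limsup condition.

  Necessity: a function with \<open>k\<^sub>i\<close> disjoint spikes of height \<open>2\<^sup>-\<^sup>i A k\<^sub>i\<close> for each \<open>i\<close>
  lies in the class (the weighted variations of the blocks form a geometric series), while
  its \<open>p\<close>-variation over the \<open>i\<close>-th block is \<open>2\<^sup>-\<^sup>i k\<^sub>i\<^sup>1\<^sup>/\<^sup>p A k\<^sub>i\<close>; choosing \<open>k\<^sub>i\<close> with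
  \<open>k\<^sub>i\<^sup>1\<^sup>/\<^sup>p A k\<^sub>i > 4\<^sup>i \<nu> k\<^sub>i\<close> contradicts membership in \<open>V\<^sub>p[\<nu>]\<close>.

  Sufficiency: arrange the normalised jumps over \<open>n\<close> intervals decreasingly,
  \<open>y\<^sub>1 \<ge> \<dots> \<ge> y\<^sub>n\<close> with \<open>\<Sum> \<psi>(y\<^sub>j) / \<Lambda> j \<le> 1\<close>, and let \<open>G\<close> bound \<open>k A(k)\<^sup>p\<close> for \<open>k \<le> n\<close>.
  Monotonicity gives \<open>\<psi>(y\<^sub>m) W m \<le> 1\<close>; taking the last \<open>K\<close> with \<open>\<psi>(y\<^sub>m) W K \<le> 2\<close> yields
  \<open>y\<^sub>m \<le> 2 A K\<close> and \<open>1/K \<le> 2\<psi>(y\<^sub>m)/\<Lambda> m + 1/n\<close>, hence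
  \<open>y\<^sub>m\<^sup>p \<le> 2\<^sup>p G (2\<psi>(y\<^sub>m)/\<Lambda> m + 1/n)\<close>, and summing over \<open>m\<close> gives \<open>\<Sum> y\<^sub>j\<^sup>p \<le> 3 \<cdot> 2\<^sup>p G\<close>.\<close>

lemma lift_Suc_mono_le_from_1:
  fixes g :: "nat \<Rightarrow> 'a::order"
  assumes "\<forall>n\<ge>1. g n \<le> g (Suc n)" and "1 \<le> i" and "i \<le> j"
  shows "g i \<le> g j"
proof -
  have "g (Suc (i - 1)) \<le> g (Suc (j - 1))"
    by (rule lift_Suc_mono_le[of "\<lambda>n. g (Suc n)"]) (use assms in auto)
  then show ?thesis using assms by simp
qed

lemma decreasing_rearrangement:
  fixes d :: "nat \<Rightarrow> 'a::linorder"
  obtains \<sigma> where "bij_betw \<sigma> {1..n} {1..n}"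
    and "\<And>i j. i \<in> {1..n} \<Longrightarrow> j \<in> {1..n} \<Longrightarrow> i \<le> j \<Longrightarrow> d (\<sigma> j) \<le> d (\<sigma> i)"
proof
  define xs where "xs = rev (sort_key d [1..<Suc n])"
  have xs: "distinct xs" "set xs = {1..n}" "length xs = n" "sorted (rev (map d xs))"
    unfolding xs_def by (auto simp: rev_map)
  have "bij_betw (\<lambda>i. i - 1) {1..n} {..<length xs}"
    by (rule bij_betw_byWitness[of _ Suc]) (auto simp: xs)
  moreover have "bij_betw ((!) xs) {..<length xs} {1..n}"
    by (rule bij_betw_nth) (auto simp: xs)
  ultimately show "bij_betw (\<lambda>i. xs ! (i - 1)) {1..n} {1..n}"
    using bij_betw_trans by (fastforce simp: o_def)
  fix i j assume "i \<in> {1..n}" "j \<in> {1..n}" "i \<le> j"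
  then show "d (xs ! (j - 1)) \<le> d (xs ! (i - 1))"
    using sorted_nth_mono[OF xs(4), of "n - j" "n - i"] xs(3) by (simp add: rev_nth)
qed

lemma sum_powr_root_mult:
  fixes y :: "nat \<Rightarrow> real"
  assumes "0 < p" "0 \<le> r" "\<And>j. j \<in> S \<Longrightarrow> 0 \<le> y j"
  shows "(\<Sum>j\<in>S. (r * y j) powr p) powr (1 / p) = r * (\<Sum>j\<in>S. y j powr p) powr (1 / p)"
proof -
  have "(\<Sum>j\<in>S. (r * y j) powr p) = r powr p * (\<Sum>j\<in>S. y j powr p)"
    using assms by (simp add: powr_mult sum_distrib_left)
  then show ?thesis
    using assms by (simp add: powr_mult powr_powr sum_nonneg)
qed

lemma powr_root_le:
  fixes x r :: real
  assumes "0 < p" "0 \<le> x" "0 \<le> r" "x \<le> r powr p"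
  shows "x powr (1 / p) \<le> r"
  using powr_mono2[of "1 / p" x "r powr p"] assms by (simp add: powr_powr)

lemma nonoverlapping_reindex:
  assumes "nonoverlapping n a b" "bij_betw \<sigma> {1..n} {1..n}"
  shows "nonoverlapping n (a \<circ> \<sigma>) (b \<circ> \<sigma>)"
  using assms bij_betwE[OF assms(2)] bij_betw_imp_inj_on[OF assms(2)]
  unfolding nonoverlapping_def inj_on_def o_def by metis

lemma nonoverlapping_inj_on_endpoints:
  assumes "nonoverlapping n a b"
  shows "inj_on a {j\<in>{1..n}. a j < b j}" and "inj_on b {j\<in>{1..n}. a j < b j}"
  using assms unfolding nonoverlapping_def inj_on_def by (smt (verit) mem_Collect_eq)+

section \<open>Young functions\<close>

locale young_function =
  fixes \<psi> :: "real \<Rightarrow> real"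
  assumes zero [simp]: "\<psi> 0 = 0"
    and convex: "convex_on {0..} \<psi>"
    and pos: "0 < x \<Longrightarrow> 0 < \<psi> x"
    and onto: "0 \<le> y \<Longrightarrow> \<exists>x\<ge>0. \<psi> x = y"
begin

lemma scale_le:
  assumes "0 \<le> t" "t \<le> 1" "0 \<le> x"
  shows "\<psi> (t * x) \<le> t * \<psi> x"
  using convex_onD[OF convex, of t 0 x] assms by simp

lemma nonneg: "0 \<le> x \<Longrightarrow> 0 \<le> \<psi> x"
  using pos[of x] by (cases "x = 0") auto

lemma strict_mono_on: "strict_mono_on {0..} \<psi>"
proof (rule strict_mono_onI)
  fix x y :: real assume "x \<in> {0..}" "y \<in> {0..}" "x < y"
  then have "\<psi> ((x / y) * y) \<le> (x / y) * \<psi> y"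
    using scale_le[of "x / y" y] by simp
  also have "\<dots> < 1 * \<psi> y"
    using pos[of y] \<open>x < y\<close> \<open>x \<in> {0..}\<close> by (intro mult_strict_right_mono) auto
  finally show "\<psi> x < \<psi> y" using \<open>x < y\<close> \<open>x \<in> {0..}\<close> by (simp split: if_splits)
qed

lemma le_iff: "0 \<le> x \<Longrightarrow> 0 \<le> y \<Longrightarrow> \<psi> x \<le> \<psi> y \<longleftrightarrow> x \<le> y"
  using strict_mono_on_leD[OF strict_mono_on] strict_mono_onD[OF strict_mono_on]
  by (meson atLeast_iff not_le)

lemma double_le: "0 \<le> x \<Longrightarrow> 2 * \<psi> x \<le> \<psi> (2 * x)"
  using scale_le[of "1/2" "2 * x"] by simp

lemma div_le: "1 \<le> M \<Longrightarrow> 0 \<le> x \<Longrightarrow> \<psi> (x / M) \<le> \<psi> x / M"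
  using scale_le[of "1 / M" x] by (simp add: field_simps)

lemma half_diff_le:
  assumes "0 \<le> u" "0 \<le> v"
  shows "\<psi> \<bar>1/2 * (v - u)\<bar> \<le> (\<psi> u + \<psi> v) / 2"
proof -
  have "\<psi> \<bar>1/2 * (v - u)\<bar> \<le> \<psi> ((1 - 1/2) *\<^sub>R u + (1/2) *\<^sub>R v)"
    using assms by (subst le_iff) (auto simp: abs_le_iff)
  also have "\<dots> \<le> (\<psi> u + \<psi> v) / 2"
    using convex_onD[OF convex, of "1/2" u v] assms by simp
  finally show ?thesis .
qed

lemma orlicz_inv_apply: "0 \<le> x \<Longrightarrow> orlicz_inv \<psi> (\<psi> x) = x"
  unfolding orlicz_inv_def
  by (rule the_equality) (use inj_onD[OF strict_mono_on_imp_inj_on[OF strict_mono_on]] in auto)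

lemma orlicz_inv_nonneg: "0 \<le> y \<Longrightarrow> 0 \<le> orlicz_inv \<psi> y"
  using onto[of y] orlicz_inv_apply by auto

lemma apply_orlicz_inv: "0 \<le> y \<Longrightarrow> \<psi> (orlicz_inv \<psi> y) = y"
  using onto[of y] orlicz_inv_apply by auto

lemma le_orlicz_inv: "0 \<le> x \<Longrightarrow> \<psi> x \<le> y \<Longrightarrow> x \<le> orlicz_inv \<psi> y"
  using le_iff[of x "orlicz_inv \<psi> y"] apply_orlicz_inv orlicz_inv_nonneg nonneg[of x] by simp

end

lemma young_function_powr:
  assumes q: "1 \<le> q"
  shows "young_function (\<lambda>x. x powr q)"
proof
  show "convex_on {0..} (\<lambda>x::real. x powr q)"
  proof (rule convex_on_linorderI)
    fix t x y :: real assume t: "0 < t" "t < 1" and xy: "x \<in> {0..}" "y \<in> {0..}" "x < y"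
    show "((1 - t) *\<^sub>R x + t *\<^sub>R y) powr q \<le> (1 - t) * x powr q + t * y powr q"
    proof (cases "x = 0")
      case True
      have "t powr q \<le> t" using t q powr_mono' [of 1 q] by (auto intro: powr_le_one_le)
      then show ?thesis using True xy by (simp add: powr_mult mult_right_mono)
    next
      case False
      then show ?thesis using convex_onD[OF powr_convex[OF q], of t x y] t xy by auto
    qed
  qed (simp add: convex_real_interval)
next
  fix y :: real assume "0 \<le> y"
  then show "\<exists>x\<ge>0. x powr q = y"
    using q by (intro exI[of _ "y powr (1 / q)"]) (simp add: powr_powr)
qed auto

lemma orlicz_inv_powr:
  assumes "1 \<le> q" "0 < s"
  shows "orlicz_inv (\<lambda>x. x powr q) (1 / s) = s powr (- 1 / q)"
proof -
  interpret young_function "\<lambda>x. x powr q" by (rule young_function_powr) fact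
  have "(s powr (- 1 / q)) powr q = s powr (- 1)"
    using assms by (simp add: powr_powr)
  then have "1 / s = (s powr (- 1 / q)) powr q"
    using assms by (simp add: powr_minus_divide)
  then show ?thesis by (simp add: orlicz_inv_apply)
qed

lemma young_function_orlicz:
  assumes "orlicz_function \<phi>"
  shows "young_function \<phi>"
proof -
  have cont: "continuous_on {0..} \<phi>" and pos: "\<forall>x>0. \<phi> x > 0"
    and small: "((\<lambda>x. \<phi> x / x) \<longlongrightarrow> 0) (at_right 0)"
    and large: "filterlim (\<lambda>x. \<phi> x / x) at_top at_top"
    using assms unfolding orlicz_function_def by auto
  have at_zero: "(\<phi> \<longlongrightarrow> \<phi> 0) (at_right 0)"
    using cont unfolding continuous_on_def by (auto intro: tendsto_within_subset)
  have "((\<lambda>x. \<phi> x / x * x) \<longlongrightarrow> 0) (at_right 0)"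
    using tendsto_mult[OF small tendsto_ident_at[of 0 "{0<..}"]] by simp
  then have "(\<phi> \<longlongrightarrow> 0) (at_right 0)"
    by (rule Lim_transform_eventually) (auto simp: eventually_at_right_field intro!: exI[of _ 1])
  then have zero: "\<phi> 0 = 0"
    using tendsto_unique[OF trivial_limit_at_right_real at_zero] by simp
  have onto: "\<exists>x\<ge>0. \<phi> x = y" if "0 \<le> y" for y
  proof -
    obtain N where N: "\<And>x. N \<le> x \<Longrightarrow> 1 \<le> \<phi> x / x"
      using large by (auto simp: filterlim_at_top eventually_at_top_linorder)
    define X where "X = max N (max y 1)"
    have "y \<le> \<phi> X" using N[of X] unfolding X_def by (simp add: field_simps)
    moreover have "continuous_on {0..X} \<phi>" using cont by (rule continuous_on_subset) auto
    ultimately show ?thesis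
      using IVT'[of \<phi> 0 y X] zero that unfolding X_def by fastforce
  qed
  show ?thesis
    using zero onto pos assms unfolding orlicz_function_def by unfold_locales auto
qed

section \<open>Sufficiency\<close>

locale weighted_young_class = young_function +
  fixes \<Lambda> :: "nat \<Rightarrow> real"
  assumes weight_pos: "1 \<le> j \<Longrightarrow> 0 < \<Lambda> j"
    and weight_mono: "\<forall>j\<ge>1. \<Lambda> j \<le> \<Lambda> (Suc j)"
begin

definition weight_sum :: "nat \<Rightarrow> real" where
  "weight_sum k = (\<Sum>j=1..k. 1 / \<Lambda> j)"

definition unit_height :: "nat \<Rightarrow> real" where
  "unit_height k = orlicz_inv \<psi> (1 / weight_sum k)"

lemma inverse_weight_antimono: "1 \<le> i \<Longrightarrow> i \<le> j \<Longrightarrow> 1 / \<Lambda> j \<le> 1 / \<Lambda> i"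
  using lift_Suc_mono_le_from_1[OF weight_mono, of i j] weight_pos[of i] by (simp add: frac_le)

lemma weight_sum_pos: "1 \<le> k \<Longrightarrow> 0 < weight_sum k"
  unfolding weight_sum_def by (intro sum_pos) (auto intro: weight_pos)

lemma weight_sum_mono: "i \<le> j \<Longrightarrow> weight_sum i \<le> weight_sum j"
  unfolding weight_sum_def by (rule sum_mono2) (auto simp: weight_pos less_imp_le)

lemma weight_sum_diff_le:
  assumes "1 \<le> m" "m \<le> k"
  shows "weight_sum k - weight_sum m \<le> real (k - m) / \<Lambda> m"
  using assms(2)
proof (induction k rule: dec_induct)
  case (step k)
  have "1 / \<Lambda> (Suc k) \<le> 1 / \<Lambda> m" using inverse_weight_antimono[of m "Suc k"] assms step by simp
  then show ?case using step by (simp add: weight_sum_def Suc_diff_le add_divide_distrib)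
qed simp

lemma sum_inverse_weight_le:
  assumes "finite S" "S \<subseteq> {1..}" "card S \<le> k"
  shows "(\<Sum>j\<in>S. 1 / \<Lambda> j) \<le> weight_sum k"
proof -
  have "(\<Sum>j\<in>S. 1 / \<Lambda> j) \<le> weight_sum (card S)"
    using assms(1,2)
  proof (induction "card S" arbitrary: S)
    case 0
    then show ?case by (simp add: weight_sum_def)
  next
    case (Suc s)
    define m where "m = Max S"
    have "S \<noteq> {}" using Suc by auto
    then have m: "m \<in> S" "S \<subseteq> {1..m}" using Suc unfolding m_def by auto
    then have "Suc s \<le> m" using card_mono[of "{1..m}" S] Suc by simp
    then have "1 / \<Lambda> m \<le> 1 / \<Lambda> (Suc s)" by (rule inverse_weight_antimono[rotated]) simp
    moreover have "s = card (S - {m})" using Suc m by simp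
    then have "(\<Sum>j\<in>S - {m}. 1 / \<Lambda> j) \<le> weight_sum s"
      using Suc.hyps(1)[of "S - {m}"] Suc.prems by auto
    ultimately show ?case
      using Suc.prems m by (simp add: sum.remove weight_sum_def flip: Suc.hyps(2))
  qed
  also have "\<dots> \<le> weight_sum k" using assms(3) by (rule weight_sum_mono)
  finally show ?thesis .
qed

lemma unit_height_nonneg: "0 \<le> unit_height k"
  unfolding unit_height_def
  using weight_sum_pos[of k] by (cases "k = 0") (auto simp: weight_sum_def intro: orlicz_inv_nonneg)

lemma psi_unit_height: "1 \<le> k \<Longrightarrow> \<psi> (unit_height k) = 1 / weight_sum k"
  unfolding unit_height_def using weight_sum_pos by (simp add: apply_orlicz_inv less_imp_le)

lemma le_twice_unit_height:
  assumes "0 \<le> y" "1 \<le> K" "\<psi> y * weight_sum K \<le> 2"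
  shows "y \<le> 2 * unit_height K"
proof -
  have "\<psi> y \<le> 2 / weight_sum K"
    using assms weight_sum_pos[of K] by (simp add: pos_le_divide_eq)
  also have "\<dots> = 2 * \<psi> (unit_height K)"
    using assms(2) by (simp add: psi_unit_height)
  also have "\<dots> \<le> \<psi> (2 * unit_height K)" by (rule double_le[OF unit_height_nonneg])
  finally show ?thesis using le_iff assms(1) unit_height_nonneg by simp
qed

lemma exists_critical_index:
  assumes Y: "0 < Y" and m: "m \<in> {1..n}" and "Y * weight_sum m \<le> 1"
  shows "\<exists>K\<in>{1..n}. Y * weight_sum K \<le> 2 \<and> 1 / real K \<le> 2 * Y / \<Lambda> m + 1 / real n"
proof -
  define S where "S = {k\<in>{m..n}. Y * weight_sum k \<le> 2}"
  define K where "K = Max S"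
  have "m \<in> S" using assms unfolding S_def by auto
  then have "K \<in> S" unfolding K_def by (intro Max_in) (auto simp: S_def)
  then have K: "K \<in> {m..n}" "Y * weight_sum K \<le> 2" unfolding S_def by auto
  have "1 / real K \<le> 2 * Y / \<Lambda> m + 1 / real n"
  proof (cases "K = n")
    case True
    then show ?thesis using Y weight_pos[of m] m by simp
  next
    case False
    then have "Suc K \<notin> S" using Max_ge[of S "Suc K"] unfolding K_def S_def by fastforce
    then have "2 < Y * weight_sum (Suc K)" using K False unfolding S_def by auto
    then have "1 < Y * (weight_sum (Suc K) - weight_sum m)"
      using assms(3) by (simp add: right_diff_distrib)
    also have "\<dots> \<le> Y * (real (Suc K - m) / \<Lambda> m)"
      using weight_sum_diff_le[of m "Suc K"] K m Y by (intro mult_left_mono) auto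
    also have "\<dots> \<le> Y * (real (Suc K) / \<Lambda> m)"
      using weight_pos[of m] m Y by (intro mult_left_mono divide_right_mono) auto
    finally have "\<Lambda> m < Y * real (Suc K)"
      using weight_pos[of m] m by (simp add: field_simps)
    also have "\<dots> \<le> 2 * Y * real K" using K m Y by simp
    finally have "1 / real K \<le> 2 * Y / \<Lambda> m"
      using K m weight_pos[of m] by (simp add: field_simps)
    then show ?thesis by (simp add: add_increasing2)
  qed
  then show ?thesis using K m by auto
qed

lemma decreasing_term_powr_le:
  assumes y: "\<forall>j\<in>{1..n}. 0 \<le> y j"
    and dec: "\<forall>i\<in>{1..n}. \<forall>j\<in>{1..n}. i \<le> j \<longrightarrow> y j \<le> y i"
    and unit: "(\<Sum>j=1..n. \<psi> (y j) / \<Lambda> j) \<le> 1"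
    and G: "\<forall>k\<in>{1..n}. real k * unit_height k powr p \<le> G"
    and p: "0 < p" and m: "m \<in> {1..n}"
  shows "y m powr p \<le> 2 powr p * G * (2 * (\<psi> (y m) / \<Lambda> m) + 1 / real n)"
proof -
  have "0 \<le> G"
    using G m by (meson order_trans unit_height_nonneg of_nat_0_le_iff mult_nonneg_nonneg powr_ge_zero)
  show ?thesis
  proof (cases "y m = 0")
    case True
    then show ?thesis
      using \<open>0 \<le> G\<close> weight_pos[of m] m by (simp add: less_imp_le)
  next
    case False
    define Y where "Y = \<psi> (y m)"
    have "0 < y m" using False y m by (auto simp: less_le)
    then have Y: "0 < Y" unfolding Y_def by (rule pos)
    have "Y * weight_sum m = (\<Sum>j=1..m. Y / \<Lambda> j)"
      unfolding weight_sum_def by (simp add: sum_distrib_left)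
    also have "\<dots> \<le> (\<Sum>j=1..m. \<psi> (y j) / \<Lambda> j)"
    proof (rule sum_mono)
      fix j assume "j \<in> {1..m}"
      then have "Y \<le> \<psi> (y j)" and "0 < \<Lambda> j"
        using dec y m le_iff[of "y m" "y j"] weight_pos[of j] unfolding Y_def by auto
      then show "Y / \<Lambda> j \<le> \<psi> (y j) / \<Lambda> j" by (simp add: divide_right_mono)
    qed
    also have "\<dots> \<le> (\<Sum>j=1..n. \<psi> (y j) / \<Lambda> j)"
      using m y by (intro sum_mono2) (auto intro!: divide_nonneg_pos nonneg weight_pos)
    finally have "Y * weight_sum m \<le> 1" using unit by simp
    then obtain K where K: "K \<in> {1..n}" "Y * weight_sum K \<le> 2"
      and K_inv: "1 / real K \<le> 2 * Y / \<Lambda> m + 1 / real n"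
      using exists_critical_index[OF Y m] by blast
    have "y m \<le> 2 * unit_height K"
      using K y m unfolding Y_def by (intro le_twice_unit_height) auto
    then have "y m powr p \<le> 2 powr p * unit_height K powr p"
      using y m p unit_height_nonneg by (simp add: powr_mono2 flip: powr_mult)
    also have "unit_height K powr p \<le> G * (1 / real K)"
      using G K by (simp add: field_simps mult.commute)
    also have "\<dots> \<le> G * (2 * (Y / \<Lambda> m) + 1 / real n)"
      using K_inv \<open>0 \<le> G\<close> by (intro mult_left_mono) auto
    finally show ?thesis by (simp add: Y_def mult.assoc)
  qed
qed

lemma decreasing_lp_norm_le:
  assumes y: "\<forall>j\<in>{1..n}. 0 \<le> y j"
    and dec: "\<forall>i\<in>{1..n}. \<forall>j\<in>{1..n}. i \<le> j \<longrightarrow> y j \<le> y i"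
    and unit: "(\<Sum>j=1..n. \<psi> (y j) / \<Lambda> j) \<le> 1"
    and g: "\<forall>k\<in>{1..n}. real k powr (1/p) * unit_height k \<le> g" and "0 \<le> g"
    and p: "0 < p"
  shows "(\<Sum>j=1..n. y j powr p) powr (1/p) \<le> 2 * 3 powr (1/p) * g"
proof -
  define G where "G = g powr p"
  have G: "\<forall>k\<in>{1..n}. real k * unit_height k powr p \<le> G"
  proof
    fix k assume "k \<in> {1..n}"
    then have "(real k powr (1/p) * unit_height k) powr p \<le> G"
      unfolding G_def using g p unit_height_nonneg by (intro powr_mono2) auto
    then show "real k * unit_height k powr p \<le> G"
      using p unit_height_nonneg by (simp add: powr_mult powr_powr)
  qed
  have "(\<Sum>j=1..n. y j powr p) \<le> (\<Sum>j=1..n. 2 powr p * G * (2 * (\<psi> (y j) / \<Lambda> j) + 1 / real n))"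
    using decreasing_term_powr_le[OF y dec unit G p] by (intro sum_mono) blast
  also have "\<dots> = 2 powr p * G * (2 * (\<Sum>j=1..n. \<psi> (y j) / \<Lambda> j) + (\<Sum>j=1..n. 1 / real n))"
    by (simp add: sum.distrib sum_distrib_left ring_distribs mult_ac)
  also have "\<dots> \<le> 2 powr p * G * 3"
  proof -
    have "(\<Sum>j=1..n. 1 / real n) \<le> 1" by (cases "n = 0") simp_all
    then show ?thesis using unit \<open>0 \<le> g\<close> by (intro mult_left_mono) (auto simp: G_def)
  qed
  also have "\<dots> = (2 * 3 powr (1/p) * g) powr p"
    using p \<open>0 \<le> g\<close> by (simp add: G_def powr_mult powr_powr)
  finally show ?thesis
    using p \<open>0 \<le> g\<close> y by (intro powr_root_le) (auto intro: sum_nonneg)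
qed

lemma phi_class_bounded:
  assumes "f \<in> phi_class (\<lambda>j x. \<psi> x / \<Lambda> j)"
  shows "\<exists>B. \<forall>x\<in>{0..1}. \<bar>f x\<bar> \<le> B"
proof -
  obtain c M where c: "0 < c" and H: "\<forall>n a b. nonoverlapping n a b \<longrightarrow>
      (\<Sum>j=1..n. \<psi> \<bar>c * (f (b j) - f (a j))\<bar> / \<Lambda> j) \<le> M"
    using assms unfolding phi_class_def by blast
  have "\<bar>f x\<bar> \<le> \<bar>f 0\<bar> + orlicz_inv \<psi> (M * \<Lambda> 1) / c" if "x \<in> {0..1}" for x
  proof -
    have "nonoverlapping 1 (\<lambda>_. 0) (\<lambda>_. x)" using that unfolding nonoverlapping_def by auto
    then have "\<psi> \<bar>c * (f x - f 0)\<bar> \<le> M * \<Lambda> 1"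
      using H weight_pos[of 1] by (fastforce simp: divide_le_eq)
    then have "c * \<bar>f x - f 0\<bar> \<le> orlicz_inv \<psi> (M * \<Lambda> 1)"
      using le_orlicz_inv c by (simp add: abs_mult)
    then have "\<bar>f x - f 0\<bar> \<le> orlicz_inv \<psi> (M * \<Lambda> 1) / c"
      using c by (simp add: pos_le_divide_eq mult.commute)
    then show ?thesis by linarith
  qed
  then show ?thesis by blast
qed

lemma lp_variation_le:
  assumes c: "0 < c" and M: "1 \<le> M"
    and H: "\<forall>n a b. nonoverlapping n a b \<longrightarrow> (\<Sum>j=1..n. \<psi> \<bar>c * (f (b j) - f (a j))\<bar> / \<Lambda> j) \<le> M"
    and g: "\<forall>k\<in>{1..n}. real k powr (1/p) * unit_height k \<le> g" "0 \<le> g"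
    and p: "0 < p" and ab: "nonoverlapping n a b"
  shows "(\<Sum>j=1..n. \<bar>f (b j) - f (a j)\<bar> powr p) powr (1/p) \<le> M / c * (2 * 3 powr (1/p) * g)"
proof -
  obtain \<sigma> where \<sigma>: "bij_betw \<sigma> {1..n} {1..n}"
    and dec: "\<And>i j. i \<in> {1..n} \<Longrightarrow> j \<in> {1..n} \<Longrightarrow> i \<le> j \<Longrightarrow>
        \<bar>f (b (\<sigma> j)) - f (a (\<sigma> j))\<bar> \<le> \<bar>f (b (\<sigma> i)) - f (a (\<sigma> i))\<bar>"
    using decreasing_rearrangement[of n "\<lambda>j. \<bar>f (b j) - f (a j)\<bar>"] by blast
  define d where "d j = \<bar>c * (f (b (\<sigma> j)) - f (a (\<sigma> j)))\<bar>" for j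
  define y where "y j = d j / M" for j
  have y: "\<forall>j\<in>{1..n}. 0 \<le> y j" using M by (simp add: y_def d_def)
  have "(\<Sum>j=1..n. \<psi> (y j) / \<Lambda> j) \<le> (\<Sum>j=1..n. \<psi> (d j) / \<Lambda> j) / M"
    unfolding sum_divide_distrib
  proof (rule sum_mono)
    fix j assume "j \<in> {1..n}"
    then have "\<psi> (y j) \<le> \<psi> (d j) / M" and "0 < \<Lambda> j"
      using div_le M weight_pos[of j] by (auto simp: y_def d_def)
    then show "\<psi> (y j) / \<Lambda> j \<le> \<psi> (d j) / \<Lambda> j / M"
      using divide_right_mono[of "\<psi> (y j)" "\<psi> (d j) / M" "\<Lambda> j"] by (simp add: mult.commute)
  qed
  also have "\<dots> \<le> 1"
    using H nonoverlapping_reindex[OF ab \<sigma>] M unfolding d_def by fastforce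
  finally have unit: "(\<Sum>j=1..n. \<psi> (y j) / \<Lambda> j) \<le> 1" .
  have "(\<Sum>j=1..n. \<bar>f (b j) - f (a j)\<bar> powr p) = (\<Sum>j=1..n. (M / c * y j) powr p)"
    using sum.reindex_bij_betw[OF \<sigma>, of "\<lambda>j. \<bar>f (b j) - f (a j)\<bar> powr p"] c M
    by (simp add: y_def d_def abs_mult)
  then have "(\<Sum>j=1..n. \<bar>f (b j) - f (a j)\<bar> powr p) powr (1/p) = M / c * (\<Sum>j=1..n. y j powr p) powr (1/p)"
    using sum_powr_root_mult[of p "M / c" "{1..n}" y] p c M y by simp
  also have "\<dots> \<le> M / c * (2 * 3 powr (1/p) * g)"
    using decreasing_lp_norm_le[OF y _ unit g p] dec c M
    by (intro mult_left_mono) (auto simp: y_def d_def abs_mult divide_right_mono)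
  finally show ?thesis .
qed

lemma phi_class_subset_Vp_nu:
  assumes p: "0 < p" and \<nu>_pos: "\<forall>n\<ge>1. 0 < \<nu> n" and \<nu>_mono: "\<forall>n\<ge>1. \<nu> n \<le> \<nu> (Suc n)"
    and B: "\<forall>k\<ge>1. real k powr (1/p) * unit_height k \<le> B * \<nu> k"
  shows "phi_class (\<lambda>j x. \<psi> x / \<Lambda> j) \<subseteq> Vp_nu p \<nu>"
proof
  fix f assume f: "f \<in> phi_class (\<lambda>j x. \<psi> x / \<Lambda> j)"
  then obtain c M where c: "0 < c" and H: "\<forall>n a b. nonoverlapping n a b \<longrightarrow>
      (\<Sum>j=1..n. \<psi> \<bar>c * (f (b j) - f (a j))\<bar> / \<Lambda> j) \<le> M"
    unfolding phi_class_def by blast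
  define M' where "M' = max M 1"
  define B' where "B' = max B 0"
  have H': "\<forall>n a b. nonoverlapping n a b \<longrightarrow>
      (\<Sum>j=1..n. \<psi> \<bar>c * (f (b j) - f (a j))\<bar> / \<Lambda> j) \<le> M'"
    using H unfolding M'_def by fastforce
  have B': "real k powr (1/p) * unit_height k \<le> B' * \<nu> n" if "k \<in> {1..n}" for k n
  proof -
    have "B * \<nu> k \<le> B' * \<nu> k" using \<nu>_pos that by (intro mult_right_mono) (auto simp: B'_def)
    also have "\<dots> \<le> B' * \<nu> n"
      using lift_Suc_mono_le_from_1[OF \<nu>_mono, of k n] that by (intro mult_left_mono) (auto simp: B'_def)
    finally show ?thesis using B that by fastforce
  qed
  have "(\<Sum>j=1..n. \<bar>f (b j) - f (a j)\<bar> powr p) powr (1/p) \<le> (M' / c * 2 * 3 powr (1/p) * B') * \<nu> n"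
    if "1 \<le> n" "nonoverlapping n a b" for n a b
  proof -
    have "0 \<le> B' * \<nu> n" using \<nu>_pos that by (simp add: B'_def less_imp_le)
    then have "(\<Sum>j=1..n. \<bar>f (b j) - f (a j)\<bar> powr p) powr (1/p) \<le> M' / c * (2 * 3 powr (1/p) * (B' * \<nu> n))"
      using that B' p by (intro lp_variation_le[OF c _ H']) (auto simp: M'_def)
    then show ?thesis by (simp add: mult_ac)
  qed
  then show "f \<in> Vp_nu p \<nu>"
    unfolding Vp_nu_def using phi_class_bounded[OF f] by blast
qed

end

section \<open>Necessity\<close>

definition peak :: "nat \<Rightarrow> real" where
  "peak e = 1 / (2 * real e + 2)"

definition trough :: "nat \<Rightarrow> real" where
  "trough e = 1 / (2 * real e + 3)"

lemma inj_peak: "inj peak"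
  by (rule injI) (simp add: peak_def)

lemma trough_ne_peak: "trough e \<noteq> peak e'"
proof
  assume "trough e = peak e'"
  then have "2 * real e + 3 = 2 * real e' + 2" by (simp add: trough_def peak_def)
  then have "2 * e + 3 = 2 * e' + 2" by linarith
  then show False by presburger
qed

lemma nonoverlapping_peak_intervals:
  assumes "inj_on ee {1..n}"
  shows "nonoverlapping n (trough \<circ> ee) (peak \<circ> ee)"
proof -
  have "peak e' \<le> trough e" if "e < e'" for e e'
    using that by (simp add: peak_def trough_def frac_le)
  moreover have "0 \<le> trough e" "trough e \<le> peak e" "peak e \<le> 1" for e
    by (simp_all add: peak_def trough_def frac_le)
  ultimately show ?thesis
    using assms unfolding nonoverlapping_def inj_on_def by (metis comp_apply linorder_neqE_nat)
qed

text \<open>Decoding \<open>e\<close> as a pair \<open>(i, l)\<close>,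
  \<open>spikes kk h\<close> equals \<open>h i\<close> at \<open>peak e\<close> for the \<open>kk i\<close> slots \<open>l < kk i\<close> of block \<open>i\<close>, and
  vanishes elsewhere.\<close>
definition spikes :: "(nat \<Rightarrow> nat) \<Rightarrow> (nat \<Rightarrow> real) \<Rightarrow> real \<Rightarrow> real" where
  "spikes kk h t = (if t \<in> range peak then
      (case prod_decode (inv peak t) of (i, l) \<Rightarrow> if l < kk i then h i else 0) else 0)"

lemma spikes_peak: "l < kk i \<Longrightarrow> spikes kk h (peak (prod_encode (i, l))) = h i"
  by (simp add: spikes_def inv_f_f[OF inj_peak])

lemma spikes_trough: "spikes kk h (trough e) = 0"
  using trough_ne_peak by (auto simp: spikes_def)

lemma spikes_nonneg: "(\<And>i. 0 \<le> h i) \<Longrightarrow> 0 \<le> spikes kk h t"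
  by (auto simp: spikes_def split: prod.split)

lemma spikes_nonzero:
  assumes "spikes kk h t \<noteq> 0"
  defines "il \<equiv> prod_decode (inv peak t)"
  shows "t = peak (prod_encode il)" "snd il < kk (fst il)" "spikes kk h t = h (fst il)"
  using assms by (auto simp: spikes_def f_inv_into_f split: prod.splits if_splits)

lemma spikes_variation:
  assumes "0 < p" "0 \<le> h i"
  shows "\<exists>a b. nonoverlapping (kk i) a b \<and>
    (\<Sum>j=1..kk i. \<bar>spikes kk h (b j) - spikes kk h (a j)\<bar> powr p) powr (1/p) = real (kk i) powr (1/p) * h i"
proof (intro exI conjI)
  define ee where "ee j = prod_encode (i, j - 1)" for j
  have "inj_on ee {1..kk i}" by (auto simp: inj_on_def ee_def prod_encode_eq)
  then show "nonoverlapping (kk i) (trough \<circ> ee) (peak \<circ> ee)"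
    by (rule nonoverlapping_peak_intervals)
  have "(\<Sum>j=1..kk i. \<bar>spikes kk h ((peak \<circ> ee) j) - spikes kk h ((trough \<circ> ee) j)\<bar> powr p)
      = (\<Sum>j=1..kk i. h i powr p)"
    using assms by (intro sum.cong) (auto simp: ee_def spikes_peak spikes_trough)
  then show "(\<Sum>j=1..kk i. \<bar>spikes kk h ((peak \<circ> ee) j) - spikes kk h ((trough \<circ> ee) j)\<bar> powr p) powr (1/p)
      = real (kk i) powr (1/p) * h i"
    using assms by (simp add: powr_mult powr_powr)
qed

context weighted_young_class
begin

lemma spikes_weighted_sum_le:
  assumes small: "\<And>i. \<psi> (h i) * weight_sum (kk i) \<le> (1/2) ^ i" and h: "\<And>i. 0 \<le> h i"
    and J: "finite J" "J \<subseteq> {1..}" and e: "inj_on e J"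
  shows "(\<Sum>j\<in>J. \<psi> (spikes kk h (e j)) / \<Lambda> j) \<le> 2"
proof -
  define J' where "J' = {j\<in>J. spikes kk h (e j) \<noteq> 0}"
  define il where "il j = prod_decode (inv peak (e j))" for j
  have il: "e j = peak (prod_encode (il j))" "snd (il j) < kk (fst (il j))"
    "spikes kk h (e j) = h (fst (il j))" if "j \<in> J'" for j
    using that spikes_nonzero[of kk h "e j"] unfolding J'_def il_def by auto
  have block: "(\<Sum>j\<in>{j\<in>J'. fst (il j) = i}. \<psi> (spikes kk h (e j)) / \<Lambda> j) \<le> (1/2) ^ i" for i
  proof -
    define Ji where "Ji = {j\<in>J'. fst (il j) = i}"
    have inj: "inj_on (\<lambda>j. snd (il j)) Ji"
    proof (rule inj_onI)
      fix j j' assume "j \<in> Ji" "j' \<in> Ji" "snd (il j) = snd (il j')"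
      then have "il j = il j'" by (simp add: Ji_def prod_eq_iff)
      then have "e j = e j'" using il(1) \<open>j \<in> Ji\<close> \<open>j' \<in> Ji\<close> by (simp add: Ji_def)
      then show "j = j'" using e \<open>j \<in> Ji\<close> \<open>j' \<in> Ji\<close> by (auto simp: Ji_def J'_def inj_on_def)
    qed
    have "(\<lambda>j. snd (il j)) ` Ji \<subseteq> {..<kk i}" using il(2) by (auto simp: Ji_def)
    then have "card Ji \<le> kk i" using card_inj_on_le[OF inj] by (metis card_lessThan finite_lessThan)
    then have "(\<Sum>j\<in>Ji. 1 / \<Lambda> j) \<le> weight_sum (kk i)"
      using J by (intro sum_inverse_weight_le) (auto simp: Ji_def J'_def)
    then have "\<psi> (h i) * (\<Sum>j\<in>Ji. 1 / \<Lambda> j) \<le> \<psi> (h i) * weight_sum (kk i)"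
      using nonneg[of "h i"] h by (intro mult_left_mono) auto
    also have "\<psi> (h i) * (\<Sum>j\<in>Ji. 1 / \<Lambda> j) = (\<Sum>j\<in>Ji. \<psi> (spikes kk h (e j)) / \<Lambda> j)"
      using il(3) by (simp add: Ji_def sum_distrib_left)
    finally show ?thesis using small[of i] unfolding Ji_def by linarith
  qed
  have "(\<Sum>j\<in>J. \<psi> (spikes kk h (e j)) / \<Lambda> j) = (\<Sum>j\<in>J'. \<psi> (spikes kk h (e j)) / \<Lambda> j)"
    using J by (intro sum.mono_neutral_right) (auto simp: J'_def)
  also have "\<dots> = (\<Sum>i\<in>(\<lambda>j. fst (il j)) ` J'. \<Sum>j\<in>{j\<in>J'. fst (il j) = i}. \<psi> (spikes kk h (e j)) / \<Lambda> j)"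
    using J by (intro sum.group[symmetric]) (auto simp: J'_def)
  also have "\<dots> \<le> (\<Sum>i\<in>(\<lambda>j. fst (il j)) ` J'. (1/2::real) ^ i)"
    by (intro sum_mono block)
  also have "\<dots> \<le> (\<Sum>i. (1/2::real) ^ i)"
    using J by (intro sum_le_suminf) (auto simp: J'_def)
  also have "\<dots> = 2" using suminf_geometric[of "1/2::real"] by simp
  finally show ?thesis .
qed

lemma spikes_half_variation_le:
  assumes small: "\<And>i. \<psi> (h i) * weight_sum (kk i) \<le> (1/2) ^ i" and h: "\<And>i. 0 \<le> h i"
    and ab: "nonoverlapping n a b"
  shows "(\<Sum>j=1..n. \<psi> \<bar>1/2 * (spikes kk h (b j) - spikes kk h (a j))\<bar> / \<Lambda> j) \<le> 2"
proof -
  let ?f = "spikes kk h"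
  define J where "J = {j\<in>{1..n}. a j < b j}"
  have J: "finite J" "J \<subseteq> {1..}" unfolding J_def by auto
  have "\<forall>j\<in>{1..n} - J. \<psi> \<bar>1/2 * (?f (b j) - ?f (a j))\<bar> / \<Lambda> j = 0"
  proof
    fix j assume j: "j \<in> {1..n} - J"
    then have "a j \<le> b j" using ab unfolding nonoverlapping_def by blast
    then have "a j = b j" using j by (simp add: J_def)
    then show "\<psi> \<bar>1/2 * (?f (b j) - ?f (a j))\<bar> / \<Lambda> j = 0" by simp
  qed
  then have "(\<Sum>j=1..n. \<psi> \<bar>1/2 * (?f (b j) - ?f (a j))\<bar> / \<Lambda> j)
      = (\<Sum>j\<in>J. \<psi> \<bar>1/2 * (?f (b j) - ?f (a j))\<bar> / \<Lambda> j)"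
    by (rule sum.mono_neutral_right[rotated 2]) (auto simp: J_def)
  also have "\<dots> \<le> (\<Sum>j\<in>J. (\<psi> (?f (a j)) / \<Lambda> j + \<psi> (?f (b j)) / \<Lambda> j) / 2)"
  proof (rule sum_mono)
    fix j assume "j \<in> J"
    then have "0 < \<Lambda> j" using J weight_pos by auto
    moreover have "\<psi> \<bar>1/2 * (?f (b j) - ?f (a j))\<bar> \<le> (\<psi> (?f (a j)) + \<psi> (?f (b j))) / 2"
      by (rule half_diff_le) (simp_all add: spikes_nonneg h)
    ultimately have "\<psi> \<bar>1/2 * (?f (b j) - ?f (a j))\<bar> / \<Lambda> j \<le> (\<psi> (?f (a j)) + \<psi> (?f (b j))) / 2 / \<Lambda> j"
      by (intro divide_right_mono) auto
    then show "\<psi> \<bar>1/2 * (?f (b j) - ?f (a j))\<bar> / \<Lambda> j \<le> (\<psi> (?f (a j)) / \<Lambda> j + \<psi> (?f (b j)) / \<Lambda> j) / 2"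
      by (simp add: add_divide_distrib)
  qed
  also have "\<dots> = ((\<Sum>j\<in>J. \<psi> (?f (a j)) / \<Lambda> j) + (\<Sum>j\<in>J. \<psi> (?f (b j)) / \<Lambda> j)) / 2"
    by (simp only: sum_divide_distrib[symmetric] sum.distrib)
  also have "\<dots> \<le> (2 + 2) / 2"
    using spikes_weighted_sum_le[OF small h J] nonoverlapping_inj_on_endpoints[OF ab]
    unfolding J_def by (intro divide_right_mono add_mono) auto
  finally show ?thesis by simp
qed

lemma spikes_in_phi_class:
  assumes "\<And>i. \<psi> (h i) * weight_sum (kk i) \<le> (1/2) ^ i" and "\<And>i. 0 \<le> h i"
  shows "spikes kk h \<in> phi_class (\<lambda>j x. \<psi> x / \<Lambda> j)"
  using spikes_half_variation_le[OF assms] unfolding phi_class_def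
  by (intro CollectI exI[of _ "1/2"] conjI exI[of _ 2]) auto

lemma unit_height_bound_if_phi_class_subset:
  assumes p: "0 < p" and \<nu>_pos: "\<forall>n\<ge>1. 0 < \<nu> n"
    and subset: "phi_class (\<lambda>j x. \<psi> x / \<Lambda> j) \<subseteq> Vp_nu p \<nu>"
  shows "\<exists>B. \<forall>k\<ge>1. real k powr (1/p) * unit_height k \<le> B * \<nu> k"
proof (rule ccontr)
  assume "\<not> ?thesis"
  then have "\<forall>i::nat. \<exists>k\<ge>1. 4 ^ i * \<nu> k < real k powr (1/p) * unit_height k"
    by (meson not_le)
  then obtain kk where kk: "\<And>i. 1 \<le> kk i"
    and large: "\<And>i. 4 ^ i * \<nu> (kk i) < real (kk i) powr (1/p) * unit_height (kk i)"
    by metis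
  define h where "h i = (1/2) ^ i * unit_height (kk i)" for i
  have h: "0 \<le> h i" for i unfolding h_def using unit_height_nonneg by simp
  have "\<psi> (h i) * weight_sum (kk i) \<le> (1/2) ^ i" for i
  proof -
    have "\<psi> (h i) \<le> (1/2) ^ i * \<psi> (unit_height (kk i))"
      unfolding h_def by (rule scale_le) (auto simp: unit_height_nonneg power_le_one)
    then show ?thesis
      using psi_unit_height[OF kk] weight_sum_pos[OF kk] by (simp add: field_simps)
  qed
  then have "spikes kk h \<in> Vp_nu p \<nu>"
    using subset spikes_in_phi_class h by blast
  then obtain M where M: "\<forall>n\<ge>1. \<forall>a b. nonoverlapping n a b \<longrightarrow>
      (\<Sum>j=1..n. \<bar>spikes kk h (b j) - spikes kk h (a j)\<bar> powr p) powr (1 / p) \<le> M * \<nu> n"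
    unfolding Vp_nu_def by blast
  obtain i :: nat where i: "M < 2 ^ i" using real_arch_pow[of 2 M] by auto
  obtain a b where "nonoverlapping (kk i) a b"
    and "(\<Sum>j=1..kk i. \<bar>spikes kk h (b j) - spikes kk h (a j)\<bar> powr p) powr (1/p) = real (kk i) powr (1/p) * h i"
    using spikes_variation[of p h i kk] p h by auto
  then have upper: "real (kk i) powr (1/p) * h i \<le> M * \<nu> (kk i)" using M kk by metis
  have "M * \<nu> (kk i) < 2 ^ i * \<nu> (kk i)" using i \<nu>_pos kk by simp
  also have "\<dots> = (1/2) ^ i * (4 ^ i * \<nu> (kk i))"
    by (simp add: power_mult_distrib[symmetric] mult.assoc[symmetric])
  also have "\<dots> < real (kk i) powr (1/p) * h i"
    using large[of i] by (simp add: h_def mult_ac)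
  finally show False using upper by simp
qed

lemma phi_class_subset_Vp_nu_iff:
  assumes "0 < p" "\<forall>n\<ge>1. 0 < \<nu> n" "\<forall>n\<ge>1. \<nu> n \<le> \<nu> (Suc n)"
  shows "phi_class (\<lambda>j x. \<psi> x / \<Lambda> j) \<subseteq> Vp_nu p \<nu> \<longleftrightarrow>
    (\<exists>B. \<forall>k\<ge>1. real k powr (1/p) * unit_height k \<le> B * \<nu> k)"
  using phi_class_subset_Vp_nu unit_height_bound_if_phi_class_subset assms by blast

end

section \<open>The five inclusions\<close>

lemma limsup_running_max_finite_iff:
  fixes g \<nu> :: "nat \<Rightarrow> real"
  assumes \<nu>_pos: "\<forall>n\<ge>1. 0 < \<nu> n" and \<nu>_mono: "\<forall>n\<ge>1. \<nu> n \<le> \<nu> (Suc n)"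
  shows "limsup (\<lambda>n. ereal (1 / \<nu> n * Max (g ` {1..n}))) < \<infinity> \<longleftrightarrow> (\<exists>B. \<forall>k\<ge>1. g k \<le> B * \<nu> k)"
proof
  assume "limsup (\<lambda>n. ereal (1 / \<nu> n * Max (g ` {1..n}))) < \<infinity>"
  then obtain C where C: "\<And>n. 1 / \<nu> n * Max (g ` {1..n}) \<le> C"
    using limsup_finite_then_bounded[of "\<lambda>n. 1 / \<nu> n * Max (g ` {1..n})"] by blast
  have "g k \<le> C * \<nu> k" if "1 \<le> k" for k
  proof -
    have "g k \<le> Max (g ` {1..k})" using that by (intro Max_ge) auto
    also have "\<dots> \<le> C * \<nu> k" using C[of k] \<nu>_pos that by (simp add: field_simps)
    finally show ?thesis .
  qed
  then show "\<exists>B. \<forall>k\<ge>1. g k \<le> B * \<nu> k" by blast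
next
  assume "\<exists>B. \<forall>k\<ge>1. g k \<le> B * \<nu> k"
  then obtain B0 where B0: "\<forall>k\<ge>1. g k \<le> B0 * \<nu> k" by blast
  define B where "B = max B0 0"
  have B: "0 \<le> B" "\<And>k. 1 \<le> k \<Longrightarrow> g k \<le> B * \<nu> k"
    using B0 \<nu>_pos unfolding B_def by (auto intro: order_trans mult_right_mono less_imp_le)
  have "1 / \<nu> n * Max (g ` {1..n}) \<le> B" if "1 \<le> n" for n
  proof -
    have "g k \<le> B * \<nu> n" if "k \<in> {1..n}" for k
      using B(2)[of k] lift_Suc_mono_le_from_1[OF \<nu>_mono, of k n] that mult_left_mono[OF _ B(1)]
      by fastforce
    then have "Max (g ` {1..n}) \<le> B * \<nu> n" using that by simp
    then show ?thesis using \<nu>_pos that by (simp add: field_simps)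
  qed
  then have "limsup (\<lambda>n. ereal (1 / \<nu> n * Max (g ` {1..n}))) \<le> ereal B"
    by (intro Limsup_bounded) (auto simp: eventually_sequentially)
  then show "limsup (\<lambda>n. ereal (1 / \<nu> n * Max (g ` {1..n}))) < \<infinity>"
    using order.strict_trans1 by fastforce
qed

lemma phi_class_subset_Vp_nu_iff_limsup:
  assumes "young_function \<psi>" "\<forall>j\<ge>1. 0 < \<Lambda> j" "\<forall>j\<ge>1. \<Lambda> j \<le> \<Lambda> (Suc j)"
    and "0 < p" "\<forall>n\<ge>1. 0 < \<nu> n" "\<forall>n\<ge>1. \<nu> n \<le> \<nu> (Suc n)"
    and C: "C = phi_class (\<lambda>j x. \<psi> x / \<Lambda> j)"
    and g: "\<And>k. 1 \<le> k \<Longrightarrow> 0 < (\<Sum>j=1..k. 1 / \<Lambda> j) \<Longrightarrow>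
      g k = real k powr (1/p) * orlicz_inv \<psi> (1 / (\<Sum>j=1..k. 1 / \<Lambda> j))"
  shows "C \<subseteq> Vp_nu p \<nu> \<longleftrightarrow> limsup (\<lambda>n. ereal (1 / \<nu> n * Max (g ` {1..n}))) < \<infinity>"
proof -
  interpret weighted_young_class \<psi> \<Lambda>
    using assms(1-3) by (simp add: weighted_young_class_def weighted_young_class_axioms_def)
  show ?thesis
    unfolding C phi_class_subset_Vp_nu_iff[OF assms(4-6)] limsup_running_max_finite_iff[OF assms(5,6)]
    using g weight_sum_pos by (simp add: unit_height_def weight_sum_def)
qed

theorem corollary6p3:
  fixes p q :: real and \<nu> \<Lambda> :: "nat \<Rightarrow> real" and \<phi> :: "real \<Rightarrow> real"
  assumes "1 \<le> p" and "1 \<le> q"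
    and "modulus_of_variation \<nu>" and "orlicz_function \<phi>" and "Lambda_sequence \<Lambda>"
  shows
   "(BV_q q \<subseteq> Vp_nu p \<nu> \<longleftrightarrow>
       limsup (\<lambda>n. ereal (1 / \<nu> n * Max ((\<lambda>k. real k powr (1/p - 1/q)) ` {1..n}))) < \<infinity>)
  \<and> (V_phi \<phi> \<subseteq> Vp_nu p \<nu> \<longleftrightarrow>
       limsup (\<lambda>n. ereal (1 / \<nu> n * Max ((\<lambda>k. real k powr (1/p) * orlicz_inv \<phi> (1 / real k)) ` {1..n}))) < \<infinity>)
  \<and> (LambdaBV \<Lambda> \<subseteq> Vp_nu p \<nu> \<longleftrightarrow>
       limsup (\<lambda>n. ereal (1 / \<nu> n * Max ((\<lambda>k. real k powr (1/p) / (\<Sum>j=1..k. 1 / \<Lambda> j)) ` {1..n}))) < \<infinity>)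
  \<and> (LambdaBV_q \<Lambda> q \<subseteq> Vp_nu p \<nu> \<longleftrightarrow>
       limsup (\<lambda>n. ereal (1 / \<nu> n * Max ((\<lambda>k. real k powr (1/p) * (\<Sum>j=1..k. 1 / \<Lambda> j) powr (- 1/q)) ` {1..n}))) < \<infinity>)
  \<and> (phiLambdaBV \<phi> \<Lambda> \<subseteq> Vp_nu p \<nu> \<longleftrightarrow>
       limsup (\<lambda>n. ereal (1 / \<nu> n * Max ((\<lambda>k. real k powr (1/p) * orlicz_inv \<phi> (1 / (\<Sum>j=1..k. 1 / \<Lambda> j))) ` {1..n}))) < \<infinity>)"
proof -
  have \<nu>: "\<forall>n\<ge>1. 0 < \<nu> n" "\<forall>n\<ge>1. \<nu> n \<le> \<nu> (Suc n)"
    using assms(3) unfolding modulus_of_variation_def by auto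
  have \<Lambda>: "\<forall>j\<ge>1. 0 < \<Lambda> j" "\<forall>j\<ge>1. \<Lambda> j \<le> \<Lambda> (Suc j)"
    using assms(5) unfolding Lambda_sequence_def by auto
  have "0 < p" using \<open>1 \<le> p\<close> by simp
  note criterion = phi_class_subset_Vp_nu_iff_limsup[OF _ _ _ this \<nu>]
  note powr = young_function_powr[OF \<open>1 \<le> q\<close>] and identity = young_function_powr[of 1]
    and orlicz = young_function_orlicz[OF assms(4)]
  show ?thesis
  proof (intro conjI, goal_cases)
    case 1 show ?case
      by (rule criterion[OF powr, of "\<lambda>_. 1"])
        (auto simp: BV_q_def orlicz_inv_powr[OF \<open>1 \<le> q\<close>] powr_diff powr_minus_divide)
  next
    case 2 show ?case
      by (rule criterion[OF orlicz, of "\<lambda>_. 1"]) (auto simp: V_phi_def)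
  next
    case 3 show ?case
      by (rule criterion[OF identity \<Lambda>])
        (auto simp: LambdaBV_def LambdaBV_q_def orlicz_inv_powr powr_minus_divide powr_one
          simp del: powr_one')
  next
    case 4 show ?case
      by (rule criterion[OF powr \<Lambda>]) (auto simp: LambdaBV_q_def orlicz_inv_powr[OF \<open>1 \<le> q\<close>])
  next
    case 5 show ?case
      by (rule criterion[OF orlicz \<Lambda>]) (simp_all add: phiLambdaBV_def)
  qed
qed

end
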